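(* Let $\alpha\in(0,2)$ and $\eta>0$. For each $x\in\mathbb{R}$ let $X(x)$ be a symmetric real random variable, and let $\sigma:\mathbb{R}\to\mathbb{R}_+$ be bounded, such that $$\lim_{u\to+\infty}\sup_{x\in\mathbb{R}}\left|u^\alpha\,\mathbb{P}(|X(x)|\geq u)-\frac{2\sigma(x)}{\alpha}\right|=0.$$ For $K\geq 1$ let $M_K(x,dh)$ denote the law of $X(x)/K^{\eta/\alpha}$. Then: (i) if $\alpha\in(1,2)$, for every $f\in C^2_b(\mathbb{R})$, $$K^\eta\int_\mathbb{R}(f(x+h)-f(x))\,M_K(x,dh)\longrightarrow \sigma(x)\int_\mathbb{R}\big(f(x+z)-f(x)-f'(x)z\mathbf{1}_{\{|z|\leq1\}}\big)\frac{dz}{|z|^{1+\alpha}}$$ as $K\to\infty$, uniformly in $x\in\mathbb{R}$; (ii) if $\alpha\in(0,1]$, the same uniform convergence holds for every compactly supported $f\in C^2_b(\mathbb{R})$.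
   Context: $C^2_b(\mathbb{R})$ denotes the twice continuously differentiable functions on $\mathbb{R}$ which are bounded together with their first two derivatives. *)

theory Defs
  imports "HOL-Probability.Probability"
begin

definition C2b :: "(real \<Rightarrow> real) \<Rightarrow> bool" where
  "C2b f \<longleftrightarrow> (\<exists>f' f''.
      (\<forall>x. (f has_real_derivative f' x) (at x)) \<and>
      (\<forall>x. (f' has_real_derivative f'' x) (at x)) \<and>
      continuous_on UNIV f'' \<and>
      bounded (range f) \<and> bounded (range f') \<and> bounded (range f''))"

definition compact_support :: "(real \<Rightarrow> real) \<Rightarrow> bool" where
  "compact_support f \<longleftrightarrow> compact (closure {x. f x \<noteq> 0})"

end

theory Submission
  imports Defs
begin

text \<open>
  Write \<open>c = K powr (\<eta>/\<alpha>)\<close>.  By the symmetry of the laws and of the Levy measure, both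
  \<open>K\<^sup>\<eta> E[f(x + X(x)/c) - f(x)]\<close> and the Levy integral only see the even part
  \<open>G(h) = (f(x+h) + f(x-h))/2 - f(x)\<close>; in particular the compensator \<open>f'(x) z\<close> drops out.
  As \<open>G(h)\<close> is the integral over \<open>[0, |h|]\<close> of \<open>g(t) = (f'(x+t) - f'(x-t))/2\<close> and
  \<open>|g(t)| \<le> sup |f''| t\<close>, Fubini turns the part \<open>|h| < R\<close> of either integral into
  \<open>\<integral>\<^sub>0\<^sup>R g(t) m{t \<le> |h| < R} dt\<close>, so only the tail functions of the two measures have to be
  compared.  For \<open>t \<ge> u\<^sub>0/c\<close> the rescaled tail \<open>K\<^sup>\<eta> P(|X| \<ge> tc) = t\<^sup>-\<^sup>\<alpha> (tc)\<^sup>\<alpha> P(|X| \<ge> tc)\<close> is within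
  \<open>\<epsilon> t\<^sup>-\<^sup>\<alpha>\<close> of the Levy tail \<open>2\<sigma>(x)/\<alpha> t\<^sup>-\<^sup>\<alpha>\<close>; below \<open>u\<^sub>0/c\<close> the crude bound \<open>K\<^sup>\<eta>\<close> only costs
  \<open>O(K\<^sup>\<eta> c\<^sup>-\<^sup>2)\<close>, which vanishes because \<open>\<alpha> < 2\<close>.  The parts \<open>|h| \<ge> R\<close> are \<open>O(R\<^sup>-\<^sup>\<alpha>)\<close> uniformly
  in \<open>x\<close> and \<open>K\<close>.
\<close>

lemma has_bochner_integral_powr_0_to:
  fixes a b :: real
  assumes "b > -1" and "a \<ge> 0"
  shows "has_bochner_integral lborel (\<lambda>t. indicator {0..a} t * t powr b) (a powr (b + 1) / (b + 1))"
proof (rule has_bochner_integral_nn_integral)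
  have "(\<integral>\<^sup>+ t. ennreal (indicator {0..a} t * t powr b) \<partial>lborel)
      = (\<integral>\<^sup>+ t. ennreal (t powr b) * indicator {0..a} t \<partial>lborel)"
    by (intro nn_integral_cong) (auto split: split_indicator)
  also have "\<dots> = ennreal (a powr (b + 1) / (b + 1))"
    by (rule nn_integral_has_integral_lebesgue'[OF _ has_integral_powr_from_0[OF assms]]) simp
  finally show "(\<integral>\<^sup>+ t. ennreal (indicator {0..a} t * t powr b) \<partial>lborel) = ennreal (a powr (b + 1) / (b + 1))" .
qed (use assms in auto)

lemma has_bochner_integral_powr_to_infinity:
  fixes a b :: real
  assumes "b < -1" and "a > 0"
  shows "has_bochner_integral lborel (\<lambda>t. indicator {a..} t * t powr b) (- (a powr (b + 1)) / (b + 1))"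
proof (rule has_bochner_integral_nn_integral)
  have "(\<integral>\<^sup>+ t. ennreal (indicator {a..} t * t powr b) \<partial>lborel)
      = (\<integral>\<^sup>+ t. ennreal (t powr b) * indicator {a..} t \<partial>lborel)"
    by (intro nn_integral_cong) (auto split: split_indicator)
  also have "\<dots> = ennreal (- (a powr (b + 1)) / (b + 1))"
    by (rule nn_integral_has_integral_lebesgue'[OF _ has_integral_powr_to_inf[OF assms]]) simp
  finally show "(\<integral>\<^sup>+ t. ennreal (indicator {a..} t * t powr b) \<partial>lborel) = ennreal (- (a powr (b + 1)) / (b + 1))" .
qed (use assms in \<open>auto simp: divide_nonneg_neg\<close>)

lemma has_bochner_integral_abs_powr_centered:
  fixes a b :: real
  assumes "b > -1" and "a \<ge> 0"
  shows "has_bochner_integral lborel (\<lambda>t. indicator {-a..a} t * \<bar>t\<bar> powr b) (2 * (a powr (b + 1) / (b + 1)))"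
proof -
  have "has_bochner_integral lborel (\<lambda>t. indicator {0..} t *\<^sub>R (indicator {-a..a} t * \<bar>t\<bar> powr b))
          (a powr (b + 1) / (b + 1))"
    using has_bochner_integral_powr_0_to[OF assms]
    by (rule has_bochner_integral_cong[THEN iffD1, rotated 3]) (auto split: split_indicator)
  from has_bochner_integral_even_function[OF this] show ?thesis
    by (auto split: split_indicator)
qed

lemma has_bochner_integral_abs_powr_tails:
  fixes a b :: real
  assumes "b < -1" and "a > 0"
  shows "has_bochner_integral lborel (\<lambda>t. indicator {t. a \<le> \<bar>t\<bar>} t * \<bar>t\<bar> powr b) (2 * (- (a powr (b + 1)) / (b + 1)))"
proof -
  have "has_bochner_integral lborel (\<lambda>t. indicator {0..} t *\<^sub>R (indicator {t. a \<le> \<bar>t\<bar>} t * \<bar>t\<bar> powr b))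
          (- (a powr (b + 1)) / (b + 1))"
    using has_bochner_integral_powr_to_infinity[OF assms]
    by (rule has_bochner_integral_cong[THEN iffD1, rotated 3]) (use assms in \<open>auto split: split_indicator\<close>)
  from has_bochner_integral_even_function[OF this] show ?thesis
    by (auto split: split_indicator)
qed

lemma has_bochner_integral_levy_tail:
  fixes \<alpha> t :: real
  assumes "0 < \<alpha>" and "0 < t"
  shows "has_bochner_integral lborel (\<lambda>h. indicator {h. t \<le> \<bar>h\<bar>} h * \<bar>h\<bar> powr - (1 + \<alpha>)) (2 / \<alpha> * t powr - \<alpha>)"
  using has_bochner_integral_abs_powr_tails[of "- (1 + \<alpha>)" t] assms by (simp add: field_simps)

lemma power2_mult_abs_powr: "z\<^sup>2 * \<bar>z\<bar> powr a = \<bar>z\<bar> powr (a + 2)" for z a :: real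
  by (cases "z = 0") (simp_all add: powr_add)

section \<open>Symmetrisation and the layer-cake formula\<close>

lemma integral_symmetrize:
  fixes M :: "real measure" and \<phi> :: "real \<Rightarrow> real"
  assumes sets: "sets M = sets borel" and symm: "distr M borel uminus = M" and int: "integrable M \<phi>"
  shows "(\<integral>h. \<phi> h \<partial>M) = (\<integral>h. (\<phi> h + \<phi> (- h)) / 2 \<partial>M)"
    and "integrable M (\<lambda>h. (\<phi> h + \<phi> (- h)) / 2)"
proof -
  have meas: "measurable M = measurable borel"
    using sets by (intro ext measurable_cong_sets) auto
  have [measurable]: "\<phi> \<in> borel_measurable borel"
    using borel_measurable_integrable[OF int] by (simp add: meas)
  have int_distr: "integrable (distr M borel uminus) \<phi>"
    using int by (simp add: symm)
  then have int_refl: "integrable M (\<lambda>h. \<phi> (- h))"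
    by (subst (asm) integrable_distr_eq) (auto simp: meas)
  have "(\<integral>h. \<phi> h \<partial>M) = (\<integral>h. \<phi> h \<partial>distr M borel uminus)"
    by (simp add: symm)
  also have "\<dots> = (\<integral>h. \<phi> (- h) \<partial>M)"
    by (rule integral_distr) (auto simp: meas)
  finally show "(\<integral>h. \<phi> h \<partial>M) = (\<integral>h. (\<phi> h + \<phi> (- h)) / 2 \<partial>M)"
    using int int_refl by simp
  show "integrable M (\<lambda>h. (\<phi> h + \<phi> (- h)) / 2)"
    using int int_refl by simp
qed

definition annulus_integral :: "real measure \<Rightarrow> (real \<Rightarrow> real) \<Rightarrow> real \<Rightarrow> real \<Rightarrow> real" where
  "annulus_integral M w R t = (\<integral>h. indicator {h. t \<le> \<bar>h\<bar> \<and> \<bar>h\<bar> < R} h * w h \<partial>M)"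

lemma annulus_integral_nonneg: "(\<And>h. 0 \<le> w h) \<Longrightarrow> 0 \<le> annulus_integral M w R t"
  unfolding annulus_integral_def by (intro integral_nonneg_AE) auto

lemma borel_measurable_annulus_integral:
  fixes M :: "real measure" and w :: "real \<Rightarrow> real"
  assumes sets: "sets M = sets borel" and sf: "sigma_finite_measure M"
    and w [measurable]: "w \<in> borel_measurable borel"
  shows "annulus_integral M w R \<in> borel_measurable borel"
proof -
  interpret sigma_finite_measure M by (rule sf)
  have meas_pair: "measurable (borel \<Otimes>\<^sub>M M) = measurable (borel \<Otimes>\<^sub>M borel)"
    using sets by (auto intro!: measurable_cong_sets sets_pair_measure_cong)
  have "(\<lambda>(t, h). indicator {h. t \<le> \<bar>h\<bar> \<and> \<bar>h\<bar> < R} h * w h) \<in> borel_measurable (borel \<Otimes>\<^sub>M M)"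
    unfolding meas_pair by measurable
  then show ?thesis
    unfolding annulus_integral_def by (rule borel_measurable_lebesgue_integral)
qed

lemma integrable_layer_cake:
  fixes M :: "real measure" and g w :: "real \<Rightarrow> real" and R B :: real
  assumes sets: "sets M = sets borel" and sf: "sigma_finite_measure M"
    and g [measurable]: "g \<in> borel_measurable borel" and g_bound: "\<And>t. 0 \<le> t \<Longrightarrow> \<bar>g t\<bar> \<le> B * t"
    and w: "w \<in> borel_measurable borel" and w_nonneg: "\<And>h. 0 \<le> w h"
    and W_int: "integrable lborel (\<lambda>t. indicator {0..R} t * t * annulus_integral M w R t)"
  shows "integrable lborel (\<lambda>t. g t * indicator {0..R} t * annulus_integral M w R t)"
proof (rule Bochner_Integration.integrable_bound)
  show "integrable lborel (\<lambda>t. B * (indicator {0..R} t * t * annulus_integral M w R t))"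
    using W_int by (rule integrable_mult_right)
  have "0 \<le> B" using g_bound[of 1] by simp
  then show "AE t in lborel. norm (g t * indicator {0..R} t * annulus_integral M w R t)
      \<le> norm (B * (indicator {0..R} t * t * annulus_integral M w R t))"
    using annulus_integral_nonneg[OF w_nonneg] g_bound
    by (auto simp: abs_mult mult.assoc[symmetric] split: split_indicator intro!: mult_right_mono)
  show "(\<lambda>t. g t * indicator {0..R} t * annulus_integral M w R t) \<in> borel_measurable lborel"
    using borel_measurable_annulus_integral[OF sets sf w] by measurable
qed

lemma integral_layer_cake:
  fixes M :: "real measure" and g w :: "real \<Rightarrow> real" and R B :: real
  assumes sets: "sets M = sets borel" and sf: "sigma_finite_measure M"
    and g [measurable]: "g \<in> borel_measurable borel" and g_bound: "\<And>t. 0 \<le> t \<Longrightarrow> \<bar>g t\<bar> \<le> B * t"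
    and w [measurable]: "w \<in> borel_measurable borel" and w_nonneg: "\<And>h. 0 \<le> w h"
    and w_int: "\<And>t. 0 < t \<Longrightarrow> integrable M (\<lambda>h. indicator {h. t \<le> \<bar>h\<bar> \<and> \<bar>h\<bar> < R} h * w h)"
    and W_int: "integrable lborel (\<lambda>t. indicator {0..R} t * t * annulus_integral M w R t)"
  shows "(\<integral>h. indicator {h. \<bar>h\<bar> < R} h * (LBINT t:{0..\<bar>h\<bar>}. g t) * w h \<partial>M)
           = (LBINT t. g t * indicator {0..R} t * annulus_integral M w R t)"
proof -
  interpret pair_sigma_finite lborel M
    by (intro pair_sigma_finite.intro lborel.sigma_finite_measure_axioms sf)
  define F where "F t h = g t * indicator {0..R} t * (indicator {h. t \<le> \<bar>h\<bar> \<and> \<bar>h\<bar> < R} h * w h)" for t h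
  have F_int: "integrable (lborel \<Otimes>\<^sub>M M) (case_prod F)"
  proof (rule Fubini_integrable)
    have meas_pair: "measurable (lborel \<Otimes>\<^sub>M M) = measurable (borel \<Otimes>\<^sub>M borel)"
      using sets by (auto intro!: measurable_cong_sets sets_pair_measure_cong)
    show "case_prod F \<in> borel_measurable (lborel \<Otimes>\<^sub>M M)"
      unfolding meas_pair F_def by measurable
    have "(\<integral>h. norm (F t h) \<partial>M) = \<bar>g t * indicator {0..R} t * annulus_integral M w R t\<bar>" for t
    proof -
      have "(\<integral>h. norm (F t h) \<partial>M)
          = (\<integral>h. \<bar>g t\<bar> * indicator {0..R} t * (indicator {h. t \<le> \<bar>h\<bar> \<and> \<bar>h\<bar> < R} h * w h) \<partial>M)"
        by (intro Bochner_Integration.integral_cong) (auto simp: F_def abs_mult w_nonneg split: split_indicator)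
      then show ?thesis
        using annulus_integral_nonneg[OF w_nonneg, where M=M and R=R and t=t] by (simp add: annulus_integral_def abs_mult)
    qed
    then show "integrable lborel (\<lambda>t. \<integral>h. norm (case_prod F (t, h)) \<partial>M)"
      using integrable_layer_cake[OF sets sf g g_bound w w_nonneg W_int] by simp
    have "integrable M (F t)" for t
    proof (cases "0 < t")
      case True
      then show ?thesis unfolding F_def by (intro integrable_mult_right w_int)
    next
      case False
      then have "F t = (\<lambda>h. 0)"
        using g_bound[of 0] by (auto simp: F_def split: split_indicator)
      then show ?thesis by simp
    qed
    then show "AE t in lborel. integrable M (\<lambda>h. case_prod F (t, h))" by simp
  qed
  have "(\<integral>h. indicator {h. \<bar>h\<bar> < R} h * (LBINT t:{0..\<bar>h\<bar>}. g t) * w h \<partial>M) = (\<integral>h. (LBINT t. F t h) \<partial>M)"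
  proof (intro Bochner_Integration.integral_cong refl)
    fix h
    have "(LBINT t. F t h) = (LBINT t. (indicator {0..\<bar>h\<bar>} t *\<^sub>R g t) * (indicator {h. \<bar>h\<bar> < R} h * w h))"
      by (intro Bochner_Integration.integral_cong) (auto simp: F_def split: split_indicator)
    then show "indicator {h. \<bar>h\<bar> < R} h * (LBINT t:{0..\<bar>h\<bar>}. g t) * w h = (LBINT t. F t h)"
      by (simp add: set_lebesgue_integral_def)
  qed
  also have "\<dots> = (LBINT t. \<integral>h. F t h \<partial>M)"
    using F_int by (rule Fubini_integral)
  also have "\<dots> = (LBINT t. g t * indicator {0..R} t * annulus_integral M w R t)"
    unfolding F_def annulus_integral_def by (intro Bochner_Integration.integral_cong refl integral_mult_right_zero)
  finally show ?thesis .
qed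

lemma levy_annulus_integral:
  fixes \<alpha> t R :: real
  assumes "0 < \<alpha>" and "0 < t" and "t \<le> R"
  shows "integrable lborel (\<lambda>h. indicator {h. t \<le> \<bar>h\<bar> \<and> \<bar>h\<bar> < R} h * \<bar>h\<bar> powr - (1 + \<alpha>))"
    and "annulus_integral lborel (\<lambda>h. \<bar>h\<bar> powr - (1 + \<alpha>)) R t = 2 / \<alpha> * (t powr - \<alpha> - R powr - \<alpha>)"
proof -
  note tail = has_bochner_integral_levy_tail[OF \<open>0 < \<alpha>\<close>]
  have annulus: "indicator {h. t \<le> \<bar>h\<bar> \<and> \<bar>h\<bar> < R} h * \<bar>h\<bar> powr - (1 + \<alpha>)
      = indicator {h. t \<le> \<bar>h\<bar>} h * \<bar>h\<bar> powr - (1 + \<alpha>) - indicator {h. R \<le> \<bar>h\<bar>} h * \<bar>h\<bar> powr - (1 + \<alpha>)"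
    for h :: real
    using assms by (auto split: split_indicator)
  have "has_bochner_integral lborel (\<lambda>h. indicator {h. t \<le> \<bar>h\<bar> \<and> \<bar>h\<bar> < R} h * \<bar>h\<bar> powr - (1 + \<alpha>))
          (2 / \<alpha> * t powr - \<alpha> - 2 / \<alpha> * R powr - \<alpha>)"
    unfolding annulus using assms by (intro has_bochner_integral_diff tail) auto
  then show "integrable lborel (\<lambda>h. indicator {h. t \<le> \<bar>h\<bar> \<and> \<bar>h\<bar> < R} h * \<bar>h\<bar> powr - (1 + \<alpha>))"
    and "annulus_integral lborel (\<lambda>h. \<bar>h\<bar> powr - (1 + \<alpha>)) R t = 2 / \<alpha> * (t powr - \<alpha> - R powr - \<alpha>)"
    by (auto simp: has_bochner_integral_iff right_diff_distrib annulus_integral_def)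
qed

lemma indicator_mult_levy_annulus_integral:
  fixes \<alpha> t R :: real
  assumes "0 < \<alpha>" and "t \<noteq> 0"
  shows "indicator {0..R} t * annulus_integral lborel (\<lambda>h. \<bar>h\<bar> powr - (1 + \<alpha>)) R t
           = indicator {0..R} t * (2 / \<alpha> * (t powr - \<alpha> - R powr - \<alpha>))"
proof (cases "0 < t \<and> t \<le> R")
  case True
  then show ?thesis
    using levy_annulus_integral(2)[OF \<open>0 < \<alpha>\<close>, of t R] by simp
qed (use assms in \<open>auto split: split_indicator\<close>)

lemma integrable_levy_annulus_layers:
  fixes \<alpha> R :: real
  assumes alpha: "0 < \<alpha>" "\<alpha> < 2" and R: "0 < R"
  shows "integrable lborel (\<lambda>t. indicator {0..R} t * t * annulus_integral lborel (\<lambda>h. \<bar>h\<bar> powr - (1 + \<alpha>)) R t)"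
proof -
  have "integrable lborel (\<lambda>t. 2 / \<alpha> * (indicator {0..R} t * t powr (1 - \<alpha>))
                                - 2 / \<alpha> * R powr - \<alpha> * (indicator {0..R} t * t powr 1))"
    using has_bochner_integral_powr_0_to[of "1 - \<alpha>" R] has_bochner_integral_powr_0_to[of 1 R] alpha R
    by (auto simp: has_bochner_integral_iff)
  also have "(\<lambda>t. 2 / \<alpha> * (indicator {0..R} t * t powr (1 - \<alpha>)) - 2 / \<alpha> * R powr - \<alpha> * (indicator {0..R} t * t powr 1))
           = (\<lambda>t. indicator {0..R} t * t * annulus_integral lborel (\<lambda>h. \<bar>h\<bar> powr - (1 + \<alpha>)) R t)"
  proof
    fix t :: real
    show "2 / \<alpha> * (indicator {0..R} t * t powr (1 - \<alpha>)) - 2 / \<alpha> * R powr - \<alpha> * (indicator {0..R} t * t powr 1)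
        = indicator {0..R} t * t * annulus_integral lborel (\<lambda>h. \<bar>h\<bar> powr - (1 + \<alpha>)) R t"
    proof (cases "t = 0")
      case False
      have "indicator {0..R} t * t * annulus_integral lborel (\<lambda>h. \<bar>h\<bar> powr - (1 + \<alpha>)) R t
          = t * (indicator {0..R} t * (2 / \<alpha> * (t powr - \<alpha> - R powr - \<alpha>)))"
        using indicator_mult_levy_annulus_integral[OF alpha(1) False, of R] by (metis mult.assoc mult.commute)
      then show ?thesis
        by (cases "0 \<le> t") (auto simp: powr_mult_base algebra_simps split: split_indicator)
    qed simp
  qed
  finally show ?thesis .
qed

section \<open>Comparing tail functions\<close>

lemma measure_distr_scale_abs_ge:
  fixes P :: "real measure" and c r :: real
  assumes sets: "sets P = sets borel" and c: "0 < c"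
  shows "measure (distr P borel (\<lambda>h. h / c)) {h. r \<le> \<bar>h\<bar>} = measure P {h. r * c \<le> \<bar>h\<bar>}"
proof -
  have "measure (distr P borel (\<lambda>h. h / c)) {h. r \<le> \<bar>h\<bar>} = measure P ((\<lambda>h. h / c) -` {h. r \<le> \<bar>h\<bar>} \<inter> space P)"
    using sets by (intro measure_distr) (auto simp: measurable_cong_sets[OF sets refl])
  also have "(\<lambda>h. h / c) -` {h. r \<le> \<bar>h\<bar>} \<inter> space P = {h. r * c \<le> \<bar>h\<bar>}"
    using c sets_eq_imp_space_eq[OF sets] by (auto simp: field_simps)
  finally show ?thesis .
qed

lemma distr_scale_symmetric:
  fixes P :: "real measure" and c :: real
  assumes sets: "sets P = sets borel" and symm: "distr P borel uminus = P"
  shows "distr (distr P borel (\<lambda>h. h / c)) borel uminus = distr P borel (\<lambda>h. h / c)"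
proof -
  have meas: "measurable P = measurable borel"
    using sets by (intro ext measurable_cong_sets) auto
  have "distr (distr P borel (\<lambda>h. h / c)) borel uminus = distr P borel ((\<lambda>h. h / c) \<circ> uminus)"
    by (subst distr_distr) (auto simp: meas comp_def)
  also have "\<dots> = distr (distr P borel uminus) borel (\<lambda>h. h / c)"
    by (subst distr_distr) (auto simp: meas)
  finally show ?thesis
    unfolding symm .
qed

lemma scaled_tail_defect_le:
  fixes P :: "real measure" and \<alpha> c r s u\<^sub>0 \<epsilon> :: real
  assumes sets: "sets P = sets borel" and alpha: "0 < \<alpha>" and c: "0 < c" and r: "0 < r" "u\<^sub>0 \<le> r * c"
    and close: "\<And>u. u\<^sub>0 \<le> u \<Longrightarrow> \<bar>u powr \<alpha> * measure P {h. u \<le> \<bar>h\<bar>} - 2 * s / \<alpha>\<bar> < \<epsilon>"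
  shows "\<bar>c powr \<alpha> * measure (distr P borel (\<lambda>h. h / c)) {h. r \<le> \<bar>h\<bar>} - s * (2 / \<alpha> * r powr - \<alpha>)\<bar>
           \<le> \<epsilon> * r powr - \<alpha>"
proof -
  have "c powr \<alpha> = r powr - \<alpha> * (r * c) powr \<alpha>"
    using r c by (simp add: powr_mult powr_minus field_simps)
  then have "c powr \<alpha> * measure (distr P borel (\<lambda>h. h / c)) {h. r \<le> \<bar>h\<bar>} - s * (2 / \<alpha> * r powr - \<alpha>)
      = r powr - \<alpha> * ((r * c) powr \<alpha> * measure P {h. r * c \<le> \<bar>h\<bar>} - 2 * s / \<alpha>)"
    unfolding measure_distr_scale_abs_ge[OF sets c] by (simp add: algebra_simps)
  also have "\<bar>\<dots>\<bar> = r powr - \<alpha> * \<bar>(r * c) powr \<alpha> * measure P {h. r * c \<le> \<bar>h\<bar>} - 2 * s / \<alpha>\<bar>"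
    by (simp add: abs_mult)
  also have "\<dots> \<le> r powr - \<alpha> * \<epsilon>"
    using close[OF r(2)] by (intro mult_left_mono) auto
  finally show ?thesis
    by (simp add: mult.commute)
qed

lemma tendsto_powr_mult_scaled_powr_0:
  fixes u p q \<gamma> :: real
  assumes "0 \<le> u" and "0 < q" and "\<gamma> < p * q"
  shows "((\<lambda>K. K powr \<gamma> * (u / K powr q) powr p) \<longlongrightarrow> 0) at_top"
proof -
  have "((\<lambda>K. u powr p * K powr (\<gamma> - p * q)) \<longlongrightarrow> u powr p * 0) at_top"
    using assms by (intro tendsto_mult tendsto_const tendsto_neg_powr filterlim_ident) auto
  moreover have "\<forall>\<^sub>F K in at_top. u powr p * K powr (\<gamma> - p * q) = K powr \<gamma> * (u / K powr q) powr p"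
    using eventually_gt_at_top[of 0]
  proof eventually_elim
    case (elim K)
    have "(u / K powr q) powr p = u powr p / K powr (p * q)"
      using assms elim by (simp add: powr_divide powr_powr mult.commute)
    then show ?case
      by (simp add: powr_diff)
  qed
  ultimately show ?thesis
    by (simp add: tendsto_cong)
qed

lemma tendsto_inner_layer_error_0:
  fixes \<alpha> \<eta> u A C :: real
  assumes alpha: "0 < \<alpha>" "\<alpha> < 2" and eta: "0 < \<eta>" and u: "0 \<le> u"
  shows "((\<lambda>K. A * K powr \<eta> * ((u / K powr (\<eta> / \<alpha>)) powr 2 / 2)
              + C * ((u / K powr (\<eta> / \<alpha>)) powr (2 - \<alpha>) / (2 - \<alpha>))) \<longlongrightarrow> 0) at_top"
proof -
  have "((\<lambda>K. A / 2 * (K powr \<eta> * (u / K powr (\<eta> / \<alpha>)) powr 2)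
              + C / (2 - \<alpha>) * (K powr 0 * (u / K powr (\<eta> / \<alpha>)) powr (2 - \<alpha>)))
          \<longlongrightarrow> A / 2 * 0 + C / (2 - \<alpha>) * 0) at_top"
    using alpha eta u by (intro tendsto_intros tendsto_powr_mult_scaled_powr_0) (auto simp: field_simps)
  moreover have "\<forall>\<^sub>F K in at_top. A / 2 * (K powr \<eta> * (u / K powr (\<eta> / \<alpha>)) powr 2)
              + C / (2 - \<alpha>) * (K powr 0 * (u / K powr (\<eta> / \<alpha>)) powr (2 - \<alpha>))
      = A * K powr \<eta> * ((u / K powr (\<eta> / \<alpha>)) powr 2 / 2) + C * ((u / K powr (\<eta> / \<alpha>)) powr (2 - \<alpha>) / (2 - \<alpha>))"
    using eventually_gt_at_top[of 0] by eventually_elim simp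
  ultimately show ?thesis
    by (simp add: tendsto_cong)
qed

lemma abs_layer_defect_le:
  fixes g D :: "real \<Rightarrow> real" and \<alpha> a R A C B \<epsilon> t :: real
  assumes a: "0 < a" "a \<le> R"
    and g_bound: "\<And>t. 0 \<le> t \<Longrightarrow> \<bar>g t\<bar> \<le> B * t"
    and D_near: "\<And>r. 0 < r \<Longrightarrow> \<bar>D r\<bar> \<le> A + C * r powr - \<alpha>"
    and D_far: "\<And>r. a \<le> r \<Longrightarrow> \<bar>D r\<bar> \<le> \<epsilon> * r powr - \<alpha>"
  shows "\<bar>g t * indicator {0..R} t * (D t - D R)\<bar>
           \<le> B * A * (indicator {0..a} t * t powr 1) + B * C * (indicator {0..a} t * t powr (1 - \<alpha>))
             + \<epsilon> * B * (indicator {0..R} t * t powr (1 - \<alpha>)) + \<epsilon> * B * R powr - \<alpha> * (indicator {0..R} t * t powr 1)"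
proof (cases "0 < t \<and> t \<le> R")
  case False
  then show ?thesis
    using g_bound[of 0] a by (cases "t = 0") (auto split: split_indicator)
next
  case True
  then have t: "0 < t" "t \<le> R" by auto
  have B: "0 \<le> B" using g_bound[of 1] by simp
  have "\<bar>g t * indicator {0..R} t * (D t - D R)\<bar> = \<bar>g t\<bar> * \<bar>D t - D R\<bar>"
    using t by (simp add: abs_mult)
  also have "\<dots> \<le> (B * t) * (\<bar>D t\<bar> + \<bar>D R\<bar>)"
    using t g_bound[of t] by (intro mult_mono abs_triangle_ineq4) auto
  also have "\<dots> = B * t * \<bar>D t\<bar> + B * t * \<bar>D R\<bar>"
    by (simp add: distrib_left)
  also have "B * t * \<bar>D R\<bar> \<le> \<epsilon> * B * R powr - \<alpha> * (indicator {0..R} t * t powr 1)"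
    using mult_left_mono[OF D_far[of R], of "B * t"] t a B by (simp add: mult_ac)
  also have "B * t * \<bar>D t\<bar> \<le> B * A * (indicator {0..a} t * t powr 1) + B * C * (indicator {0..a} t * t powr (1 - \<alpha>))
      + \<epsilon> * B * (indicator {0..R} t * t powr (1 - \<alpha>))"
  proof (cases "t \<le> a")
    case True
    have "B * t * \<bar>D t\<bar> \<le> B * t * (A + C * t powr - \<alpha>)"
      using D_near[OF t(1)] B t by (intro mult_left_mono) auto
    also have "\<dots> = B * A * (indicator {0..a} t * t powr 1) + B * C * (indicator {0..a} t * t powr (1 - \<alpha>))"
      using True t by (simp add: powr_mult_base algebra_simps)
    moreover have "0 \<le> \<epsilon>"
      using D_far[of a] a by (smt (verit) powr_gt_zero zero_le_mult_iff)
    then have "0 \<le> \<epsilon> * B * (indicator {0..R} t * t powr (1 - \<alpha>))"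
      using B by simp
    ultimately show ?thesis
      by linarith
  next
    case False
    have "B * t * \<bar>D t\<bar> \<le> B * t * (\<epsilon> * t powr - \<alpha>)"
      using D_far[of t] False B t by (intro mult_left_mono) auto
    also have "\<dots> = \<epsilon> * B * (indicator {0..R} t * t powr (1 - \<alpha>))"
      using t by (simp add: powr_mult_base algebra_simps)
    finally show ?thesis
      using False by simp
  qed
  finally show ?thesis
    by (simp add: algebra_simps)
qed

lemma abs_integral_layer_defect_le:
  fixes g D :: "real \<Rightarrow> real" and \<alpha> a R A C B \<epsilon> :: real
  assumes alpha: "0 < \<alpha>" "\<alpha> < 2" and a: "0 < a" "a \<le> R"
    and g_bound: "\<And>t. 0 \<le> t \<Longrightarrow> \<bar>g t\<bar> \<le> B * t"
    and D_near: "\<And>r. 0 < r \<Longrightarrow> \<bar>D r\<bar> \<le> A + C * r powr - \<alpha>"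
    and D_far: "\<And>r. a \<le> r \<Longrightarrow> \<bar>D r\<bar> \<le> \<epsilon> * r powr - \<alpha>"
    and int: "integrable lborel (\<lambda>t. g t * indicator {0..R} t * (D t - D R))"
  shows "\<bar>LBINT t. g t * indicator {0..R} t * (D t - D R)\<bar>
           \<le> B * A * (a powr 2 / 2) + B * C * (a powr (2 - \<alpha>) / (2 - \<alpha>))
             + \<epsilon> * B * (R powr (2 - \<alpha>) / (2 - \<alpha>) + R powr - \<alpha> * (R powr 2 / 2))"
proof -
  define m where "m t = B * A * (indicator {0..a} t * t powr 1) + B * C * (indicator {0..a} t * t powr (1 - \<alpha>))
      + \<epsilon> * B * (indicator {0..R} t * t powr (1 - \<alpha>)) + \<epsilon> * B * R powr - \<alpha> * (indicator {0..R} t * t powr 1)"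
    for t
  have linear: "has_bochner_integral lborel (\<lambda>t. indicator {0..r} t * t powr 1) (r powr 2 / 2)"
    if "0 \<le> r" for r :: real
    using has_bochner_integral_powr_0_to[of 1 r] that by simp
  have sublinear: "has_bochner_integral lborel (\<lambda>t. indicator {0..r} t * t powr (1 - \<alpha>)) (r powr (2 - \<alpha>) / (2 - \<alpha>))"
    if "0 \<le> r" for r :: real
    using has_bochner_integral_powr_0_to[of "1 - \<alpha>" r] that alpha by (simp add: algebra_simps)
  have m_integral: "has_bochner_integral lborel m
      (B * A * (a powr 2 / 2) + B * C * (a powr (2 - \<alpha>) / (2 - \<alpha>))
       + \<epsilon> * B * (R powr (2 - \<alpha>) / (2 - \<alpha>)) + \<epsilon> * B * R powr - \<alpha> * (R powr 2 / 2))"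
    unfolding m_def using a
    by (intro has_bochner_integral_add has_bochner_integral_mult_right linear sublinear) auto
  have "\<bar>LBINT t. g t * indicator {0..R} t * (D t - D R)\<bar> \<le> (LBINT t. m t)"
    using Bochner_Integration.integral_norm_bound_integral[OF int, of m] m_integral
      abs_layer_defect_le[OF a g_bound D_near D_far]
    by (simp add: has_bochner_integral_iff m_def)
  then show ?thesis
    using m_integral by (simp add: has_bochner_integral_iff algebra_simps)
qed

definition sym_diff :: "(real \<Rightarrow> real) \<Rightarrow> real \<Rightarrow> real \<Rightarrow> real" where
  "sym_diff f x h = (f (x + h) + f (x - h)) / 2 - f x"

definition antisym_diff :: "(real \<Rightarrow> real) \<Rightarrow> real \<Rightarrow> real \<Rightarrow> real" where
  "antisym_diff f x h = (f (x + h) - f (x - h)) / 2"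

lemma sym_diff_abs: "sym_diff f x \<bar>h\<bar> = sym_diff f x h"
  by (simp add: sym_diff_def abs_if)

lemma antisym_diff_0 [simp]: "antisym_diff f x 0 = 0"
  by (simp add: antisym_diff_def)

lemma sym_diff_0 [simp]: "sym_diff f x 0 = 0"
  by (simp add: sym_diff_def)

locale C2_bounded =
  fixes f f' f'' :: "real \<Rightarrow> real" and F B :: real
  assumes deriv_f: "\<And>x. (f has_real_derivative f' x) (at x)"
    and deriv_f': "\<And>x. (f' has_real_derivative f'' x) (at x)"
    and abs_f_le: "\<And>x. \<bar>f x\<bar> \<le> F"
    and abs_f''_le: "\<And>x. \<bar>f'' x\<bar> \<le> B"
begin

lemma F_nonneg: "0 \<le> F" and B_nonneg: "0 \<le> B"
  using abs_f_le[of 0] abs_f''_le[of 0] by auto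

lemma borel_measurable_f_f' [measurable]: "f \<in> borel_measurable borel" "f' \<in> borel_measurable borel"
  using deriv_f deriv_f'
  by (auto intro!: borel_measurable_continuous_onI continuous_at_imp_continuous_on DERIV_isCont)

lemma continuous_on_f': "continuous_on UNIV f'"
  using deriv_f' by (intro continuous_at_imp_continuous_on) (auto intro: DERIV_isCont)

lemma abs_f_diff_le: "\<bar>f y - f z\<bar> \<le> 2 * F"
  using abs_f_le[of y] abs_f_le[of z] by linarith

lemma abs_sym_diff_le: "\<bar>sym_diff f x h\<bar> \<le> 2 * F"
  using abs_f_le[of "x + h"] abs_f_le[of "x - h"] abs_f_le[of x]
  unfolding sym_diff_def by (simp add: abs_le_iff field_simps; linarith)

lemma abs_f'_diff_le: "\<bar>f' y - f' z\<bar> \<le> B * \<bar>y - z\<bar>"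
  using field_differentiable_bound[OF convex_UNIV, of f' f'' B] deriv_f' abs_f''_le by simp

lemma abs_antisym_diff_le: "\<bar>antisym_diff f' x t\<bar> \<le> B * \<bar>t\<bar>"
  using abs_f'_diff_le[of "x + t" "x - t"] by (simp add: antisym_diff_def)

lemma abs_taylor_remainder_le: "\<bar>f (x + z) - f x - f' x * z\<bar> \<le> B * z\<^sup>2"
proof -
  define \<phi> where "\<phi> w = f (x + w) - f' x * w" for w
  let ?S = "{-\<bar>z\<bar>..\<bar>z\<bar>}"
  have "norm (\<phi> z - \<phi> 0) \<le> B * \<bar>z\<bar> * norm (z - 0)"
  proof (rule field_differentiable_bound[of ?S])
    fix w assume w: "w \<in> ?S"
    have "((\<lambda>w. f (x + w)) has_real_derivative f' (x + w) * 1) (at w)"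
      by (rule DERIV_chain2[OF deriv_f]) (auto intro!: derivative_eq_intros)
    then have "(\<phi> has_field_derivative f' (x + w) * 1 - f' x * 1) (at w)"
      unfolding \<phi>_def by (intro DERIV_diff DERIV_cmult) (auto intro: DERIV_ident)
    then show "(\<phi> has_field_derivative f' (x + w) - f' x) (at w within ?S)"
      by (simp add: has_field_derivative_at_within)
    show "norm (f' (x + w) - f' x) \<le> B * \<bar>z\<bar>"
      using abs_f'_diff_le[of "x + w" x] w B_nonneg
      by (auto intro: order_trans[OF _ mult_left_mono])
  qed auto
  then show ?thesis by (simp add: \<phi>_def power2_eq_square abs_mult_self mult.assoc)
qed

lemma sym_diff_eq_integral: "sym_diff f x h = (LBINT t:{0..\<bar>h\<bar>}. antisym_diff f' x t)"
proof -
  have cont: "continuous_on {0..\<bar>h\<bar>} (antisym_diff f' x)"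
    unfolding antisym_diff_def
    by (intro continuous_intros continuous_on_compose2[OF continuous_on_f']) auto
  have "(sym_diff f x has_real_derivative antisym_diff f' x t) (at t)" for t
  proof -
    have "((\<lambda>t. f (x + t)) has_real_derivative f' (x + t) * 1) (at t)"
      by (rule DERIV_chain2[OF deriv_f]) (auto intro!: derivative_eq_intros)
    moreover have "((\<lambda>t. f (x - t)) has_real_derivative f' (x - t) * (- 1)) (at t)"
      by (rule DERIV_chain2[OF deriv_f]) (auto intro!: derivative_eq_intros)
    ultimately have "(sym_diff f x has_real_derivative (f' (x + t) * 1 + f' (x - t) * (- 1)) / 2 - 0) (at t)"
      unfolding sym_diff_def by (intro DERIV_diff DERIV_cdivide DERIV_add DERIV_const)
    then show ?thesis by (simp add: antisym_diff_def)
  qed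
  then have "(sym_diff f x has_vector_derivative antisym_diff f' x t) (at t within {0..\<bar>h\<bar>})" for t
    by (simp add: has_real_derivative_iff_has_vector_derivative[symmetric] has_field_derivative_at_within)
  from integral_FTC_atLeastAtMost[OF abs_ge_zero this cont]
  show ?thesis
    by (simp add: set_lebesgue_integral_def sym_diff_abs sym_diff_0)
qed

section \<open>Layer representations of the two generators\<close>

lemma integral_sym_diff_split:
  fixes M :: "real measure" and w :: "real \<Rightarrow> real" and R :: real
  assumes sets: "sets M = sets borel" and sf: "sigma_finite_measure M"
    and w [measurable]: "w \<in> borel_measurable borel" and w_nonneg: "\<And>h. 0 \<le> w h"
    and int: "integrable M (\<lambda>h. sym_diff f x h * w h)"
    and w_int: "\<And>t. 0 < t \<Longrightarrow> integrable M (\<lambda>h. indicator {h. t \<le> \<bar>h\<bar> \<and> \<bar>h\<bar> < R} h * w h)"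
    and W_int: "integrable lborel (\<lambda>t. indicator {0..R} t * t * annulus_integral M w R t)"
  shows "(\<integral>h. sym_diff f x h * w h \<partial>M)
           = (LBINT t. antisym_diff f' x t * indicator {0..R} t * annulus_integral M w R t)
             + (\<integral>h. indicator {h. R \<le> \<bar>h\<bar>} h * sym_diff f x h * w h \<partial>M)"
    and "integrable lborel (\<lambda>t. antisym_diff f' x t * indicator {0..R} t * annulus_integral M w R t)"
proof -
  have antisym_bound: "\<bar>antisym_diff f' x t\<bar> \<le> B * t" if "0 \<le> t" for t
    using abs_antisym_diff_le[of x t] that by simp
  have antisym_meas: "antisym_diff f' x \<in> borel_measurable borel"
    unfolding antisym_diff_def by measurable
  show "integrable lborel (\<lambda>t. antisym_diff f' x t * indicator {0..R} t * annulus_integral M w R t)"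
    by (rule integrable_layer_cake[OF sets sf antisym_meas antisym_bound w w_nonneg W_int])
  have int_part: "integrable M (\<lambda>h. indicator A h * sym_diff f x h * w h)" if "A \<in> sets borel" for A
    using integrable_mult_indicator[OF _ int, of A] that sets by (simp add: mult.assoc)
  have "(\<integral>h. sym_diff f x h * w h \<partial>M)
      = (\<integral>h. indicator {h. \<bar>h\<bar> < R} h * sym_diff f x h * w h
             + indicator {h. R \<le> \<bar>h\<bar>} h * sym_diff f x h * w h \<partial>M)"
    by (intro Bochner_Integration.integral_cong) (auto split: split_indicator)
  also have "\<dots> = (\<integral>h. indicator {h. \<bar>h\<bar> < R} h * sym_diff f x h * w h \<partial>M)
        + (\<integral>h. indicator {h. R \<le> \<bar>h\<bar>} h * sym_diff f x h * w h \<partial>M)"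
    by (simp add: int_part)
  also have "(\<integral>h. indicator {h. \<bar>h\<bar> < R} h * sym_diff f x h * w h \<partial>M)
      = (LBINT t. antisym_diff f' x t * indicator {0..R} t * annulus_integral M w R t)"
    unfolding sym_diff_eq_integral
    by (rule integral_layer_cake[OF sets sf antisym_meas antisym_bound w w_nonneg w_int W_int])
  finally show "(\<integral>h. sym_diff f x h * w h \<partial>M)
           = (LBINT t. antisym_diff f' x t * indicator {0..R} t * annulus_integral M w R t)
             + (\<integral>h. indicator {h. R \<le> \<bar>h\<bar>} h * sym_diff f x h * w h \<partial>M)" .
qed

lemma integral_increment_layers:
  fixes Q :: "real measure" and R :: real
  assumes Q: "prob_space Q" and sets: "sets Q = sets borel" and symm: "distr Q borel uminus = Q"
    and R: "R > 0"
  shows "(LINT h|Q. f (x + h) - f x)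
           = (LBINT t. antisym_diff f' x t * indicator {0..R} t * measure Q {h. t \<le> \<bar>h\<bar> \<and> \<bar>h\<bar> < R})
             + (\<integral>h. indicator {h. R \<le> \<bar>h\<bar>} h * sym_diff f x h \<partial>Q)"
    and "integrable lborel (\<lambda>t. antisym_diff f' x t * indicator {0..R} t * measure Q {h. t \<le> \<bar>h\<bar> \<and> \<bar>h\<bar> < R})"
proof -
  interpret prob_space Q by (rule Q)
  have meas: "measurable Q = measurable borel"
    using sets by (intro ext measurable_cong_sets) auto
  have int_bounded: "integrable Q \<phi>" if "\<phi> \<in> borel_measurable borel" "\<And>h. \<bar>\<phi> h\<bar> \<le> C" for \<phi> :: "real \<Rightarrow> real" and C
    by (rule integrable_const_bound[where B=C]) (use that in \<open>auto simp: meas\<close>)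
  have annulus_measure: "annulus_integral Q (\<lambda>_. 1) R t = measure Q {h. t \<le> \<bar>h\<bar> \<and> \<bar>h\<bar> < R}" for t
    using sets_eq_imp_space_eq[OF sets] by (simp add: annulus_integral_def)
  have "(LINT h|Q. f (x + h) - f x) = (LINT h|Q. ((f (x + h) - f x) + (f (x + - h) - f x)) / 2)"
    using abs_f_diff_le by (intro integral_symmetrize[OF sets symm] int_bounded[of _ "2 * F"]) auto
  also have "\<dots> = (LINT h|Q. sym_diff f x h * 1)"
    by (intro Bochner_Integration.integral_cong) (auto simp: sym_diff_def field_simps)
  finally have symmetrized: "(LINT h|Q. f (x + h) - f x) = (LINT h|Q. sym_diff f x h * 1)" .
  have W_int: "integrable lborel (\<lambda>t. indicator {0..R} t * t * annulus_integral Q (\<lambda>_. 1) R t)"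
  proof (rule Bochner_Integration.integrable_bound)
    show "integrable lborel (\<lambda>t. R * indicator {0..R} t)"
      using borel_integrable_atLeastAtMost[of 0 R "\<lambda>_. R"] by simp
    have "t * measure Q {h. t \<le> \<bar>h\<bar> \<and> \<bar>h\<bar> < R} \<le> R" if "0 \<le> t" "t \<le> R" for t
      using mult_mono[of t R "measure Q {h. t \<le> \<bar>h\<bar> \<and> \<bar>h\<bar> < R}" 1] that by simp
    then show "AE t in lborel. norm (indicator {0..R} t * t * annulus_integral Q (\<lambda>_. 1) R t) \<le> norm (R * indicator {0..R} t)"
      unfolding annulus_measure using R by (auto split: split_indicator)
    show "(\<lambda>t. indicator {0..R} t * t * annulus_integral Q (\<lambda>_. 1) R t) \<in> borel_measurable lborel"
      using borel_measurable_annulus_integral[OF sets prob_space_imp_sigma_finite[OF Q], of "\<lambda>_. 1" R]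
      by measurable
  qed
  have sym_diff_int: "integrable Q (\<lambda>h. sym_diff f x h * 1)"
    using abs_sym_diff_le by (intro int_bounded[of _ "2 * F"]) (auto simp: sym_diff_def)
  have annulus_int: "integrable Q (\<lambda>h. indicator {h. t \<le> \<bar>h\<bar> \<and> \<bar>h\<bar> < R} h * (1 :: real))" if "0 < t" for t
    by (intro int_bounded[of _ 1]) (auto split: split_indicator)
  note split = integral_sym_diff_split[OF sets prob_space_imp_sigma_finite[OF Q] borel_measurable_const
      zero_le_one sym_diff_int annulus_int W_int]
  show "(LINT h|Q. f (x + h) - f x)
           = (LBINT t. antisym_diff f' x t * indicator {0..R} t * measure Q {h. t \<le> \<bar>h\<bar> \<and> \<bar>h\<bar> < R})
             + (\<integral>h. indicator {h. R \<le> \<bar>h\<bar>} h * sym_diff f x h \<partial>Q)"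
    and "integrable lborel (\<lambda>t. antisym_diff f' x t * indicator {0..R} t * measure Q {h. t \<le> \<bar>h\<bar> \<and> \<bar>h\<bar> < R})"
    using split unfolding symmetrized annulus_measure by simp_all
qed

lemma integrable_levy_integrand:
  fixes \<alpha> :: real
  assumes "0 < \<alpha>" and "\<alpha> < 2"
  shows "integrable lborel (\<lambda>z. (f (x + z) - f x - f' x * z * (if \<bar>z\<bar> \<le> 1 then 1 else 0)) * \<bar>z\<bar> powr - (1 + \<alpha>))"
    (is "integrable lborel ?I")
proof (rule Bochner_Integration.integrable_bound)
  show "integrable lborel (\<lambda>z. B * (indicator {-1..1} z * \<bar>z\<bar> powr (1 - \<alpha>))
                              + 2 * F * (indicator {z. 1 \<le> \<bar>z\<bar>} z * \<bar>z\<bar> powr - (1 + \<alpha>)))"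
    using has_bochner_integral_abs_powr_centered[of "1 - \<alpha>" 1] has_bochner_integral_levy_tail[of \<alpha> 1] assms
    by (auto simp: has_bochner_integral_iff)
  have bound: "\<bar>?I z\<bar> \<le> B * (indicator {-1..1} z * \<bar>z\<bar> powr (1 - \<alpha>)) + 2 * F * (indicator {z. 1 \<le> \<bar>z\<bar>} z * \<bar>z\<bar> powr - (1 + \<alpha>))"
    for z
  proof (cases "\<bar>z\<bar> \<le> 1")
    case True
    have "\<bar>?I z\<bar> = \<bar>f (x + z) - f x - f' x * z\<bar> * \<bar>z\<bar> powr - (1 + \<alpha>)"
      using True by (simp add: abs_mult)
    also have "\<dots> \<le> B * z\<^sup>2 * \<bar>z\<bar> powr - (1 + \<alpha>)"
      by (rule mult_right_mono[OF abs_taylor_remainder_le]) simp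
    also have "\<dots> = B * \<bar>z\<bar> powr (1 - \<alpha>)"
      by (simp add: mult.assoc power2_mult_abs_powr)
    finally show ?thesis
      using True F_nonneg by (auto split: split_indicator)
  next
    case False
    have "\<bar>?I z\<bar> = \<bar>f (x + z) - f x\<bar> * \<bar>z\<bar> powr - (1 + \<alpha>)"
      using False by (simp add: abs_mult)
    also have "\<dots> \<le> 2 * F * \<bar>z\<bar> powr - (1 + \<alpha>)"
      using abs_f_diff_le by (intro mult_right_mono) auto
    finally show ?thesis
      using False B_nonneg by (auto split: split_indicator)
  qed
  then show "AE z in lborel. norm (?I z) \<le> norm (B * (indicator {-1..1} z * \<bar>z\<bar> powr (1 - \<alpha>))
                              + 2 * F * (indicator {z. 1 \<le> \<bar>z\<bar>} z * \<bar>z\<bar> powr - (1 + \<alpha>)))"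
    using bound by (intro AE_I2) (simp only: real_norm_def, rule order_trans[OF _ abs_ge_self])
qed (simp only: measurable_lborel2, measurable)

lemma levy_integral_layers:
  fixes \<alpha> R :: real
  assumes alpha: "0 < \<alpha>" "\<alpha> < 2" and R: "R > 0"
  shows "(LBINT z. (f (x + z) - f x - f' x * z * (if \<bar>z\<bar> \<le> 1 then 1 else 0)) * \<bar>z\<bar> powr - (1 + \<alpha>))
           = (LBINT t. antisym_diff f' x t * indicator {0..R} t * (2 / \<alpha> * (t powr - \<alpha> - R powr - \<alpha>)))
             + (LBINT h. indicator {h. R \<le> \<bar>h\<bar>} h * sym_diff f x h * \<bar>h\<bar> powr - (1 + \<alpha>))"
    and "integrable lborel (\<lambda>t. antisym_diff f' x t * indicator {0..R} t * (2 / \<alpha> * (t powr - \<alpha> - R powr - \<alpha>)))"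
proof -
  define w where "w h = \<bar>h\<bar> powr - (1 + \<alpha>)" for h :: real
  have w_meas: "w \<in> borel_measurable borel"
    unfolding w_def by measurable
  have w_nonneg: "0 \<le> w h" for h
    by (simp add: w_def)
  have even_part: "((f (x + z) - f x - f' x * z * (if \<bar>z\<bar> \<le> 1 then 1 else 0)) * \<bar>z\<bar> powr - (1 + \<alpha>)
      + (f (x + - z) - f x - f' x * - z * (if \<bar>- z\<bar> \<le> 1 then 1 else 0)) * \<bar>- z\<bar> powr - (1 + \<alpha>))
      / 2 = sym_diff f x z * w z" for z
    by (simp add: sym_diff_def w_def field_simps)
  note symmetrized = integral_symmetrize[OF sets_lborel lborel_distr_uminus integrable_levy_integrand[OF alpha, of x],
      unfolded even_part]
  have w_int: "integrable lborel (\<lambda>h. indicator {h. t \<le> \<bar>h\<bar> \<and> \<bar>h\<bar> < R} h * w h)" if "0 < t" for t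
  proof (cases "t \<le> R")
    case True
    then show ?thesis using levy_annulus_integral(1)[OF alpha(1) that] by (simp add: w_def)
  qed simp
  note split = integral_sym_diff_split[OF sets_lborel lborel.sigma_finite_measure_axioms w_meas w_nonneg
      symmetrized(2) w_int integrable_levy_annulus_layers[OF alpha R, folded w_def]]
  have layers_eq: "antisym_diff f' x t * indicator {0..R} t * annulus_integral lborel w R t
      = antisym_diff f' x t * indicator {0..R} t * (2 / \<alpha> * (t powr - \<alpha> - R powr - \<alpha>))" for t
    using indicator_mult_levy_annulus_integral[OF alpha(1), of t R, folded w_def]
    by (cases "t = 0") (simp_all add: mult.assoc)
  show "integrable lborel (\<lambda>t. antisym_diff f' x t * indicator {0..R} t * (2 / \<alpha> * (t powr - \<alpha> - R powr - \<alpha>)))"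
    using split(2)[unfolded layers_eq] .
  show "(LBINT z. (f (x + z) - f x - f' x * z * (if \<bar>z\<bar> \<le> 1 then 1 else 0)) * \<bar>z\<bar> powr - (1 + \<alpha>))
           = (LBINT t. antisym_diff f' x t * indicator {0..R} t * (2 / \<alpha> * (t powr - \<alpha> - R powr - \<alpha>)))
             + (LBINT h. indicator {h. R \<le> \<bar>h\<bar>} h * sym_diff f x h * \<bar>h\<bar> powr - (1 + \<alpha>))"
    using split(1)[unfolded layers_eq] unfolding symmetrized(1) by (simp add: w_def)
qed

section \<open>The uniform estimate\<close>

lemma abs_integral_tail_le:
  fixes Q :: "real measure" and R :: real
  assumes Q: "prob_space Q" and sets: "sets Q = sets borel"
  shows "\<bar>\<integral>h. indicator {h. R \<le> \<bar>h\<bar>} h * sym_diff f x h \<partial>Q\<bar> \<le> 2 * F * measure Q {h. R \<le> \<bar>h\<bar>}"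
proof -
  interpret prob_space Q by (rule Q)
  have meas: "measurable Q = measurable borel"
    using sets by (intro ext measurable_cong_sets) auto
  have bound: "\<bar>indicator {h. R \<le> \<bar>h\<bar>} h * sym_diff f x h\<bar> \<le> 2 * F * indicator {h. R \<le> \<bar>h\<bar>} h" for h
    using abs_sym_diff_le[of x h] by (auto split: split_indicator)
  have "integrable Q (\<lambda>h. indicator {h. R \<le> \<bar>h\<bar>} h * sym_diff f x h)"
  proof (rule integrable_const_bound[where B="2 * F"])
    show "AE h in Q. norm (indicator {h. R \<le> \<bar>h\<bar>} h * sym_diff f x h) \<le> 2 * F"
      using abs_sym_diff_le F_nonneg by (intro AE_I2) (auto split: split_indicator)
  qed (simp add: meas sym_diff_def)
  moreover have "integrable Q (\<lambda>h. 2 * F * indicator {h. R \<le> \<bar>h\<bar>} h)"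
    by (intro integrable_const_bound[where B="2 * F"]) (auto simp: meas F_nonneg split: split_indicator)
  ultimately have "norm (\<integral>h. indicator {h. R \<le> \<bar>h\<bar>} h * sym_diff f x h \<partial>Q) \<le> (\<integral>h. 2 * F * indicator {h. R \<le> \<bar>h\<bar>} h \<partial>Q)"
    using bound by (intro Bochner_Integration.integral_norm_bound_integral) auto
  also have "\<dots> = 2 * F * measure Q {h. R \<le> \<bar>h\<bar>}"
    using sets_eq_imp_space_eq[OF sets] by simp
  finally show ?thesis by simp
qed

lemma abs_levy_tail_le:
  fixes \<alpha> R :: real
  assumes "0 < \<alpha>" and "0 < R"
  shows "\<bar>LBINT h. indicator {h. R \<le> \<bar>h\<bar>} h * sym_diff f x h * \<bar>h\<bar> powr - (1 + \<alpha>)\<bar> \<le> 2 * F * (2 / \<alpha> * R powr - \<alpha>)"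
proof -
  note tail = has_bochner_integral_levy_tail[OF assms]
  have bound: "\<bar>indicator {h. R \<le> \<bar>h\<bar>} h * sym_diff f x h * \<bar>h\<bar> powr - (1 + \<alpha>)\<bar>
      \<le> 2 * F * (indicator {h. R \<le> \<bar>h\<bar>} h * \<bar>h\<bar> powr - (1 + \<alpha>))" for h
  proof -
    have "\<bar>indicator {h. R \<le> \<bar>h\<bar>} h * sym_diff f x h * \<bar>h\<bar> powr - (1 + \<alpha>)\<bar>
        = indicator {h. R \<le> \<bar>h\<bar>} h * \<bar>sym_diff f x h\<bar> * \<bar>h\<bar> powr - (1 + \<alpha>)"
      by (simp add: abs_mult)
    also have "\<dots> \<le> indicator {h. R \<le> \<bar>h\<bar>} h * (2 * F) * \<bar>h\<bar> powr - (1 + \<alpha>)"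
      by (intro mult_right_mono mult_left_mono abs_sym_diff_le) auto
    finally show ?thesis by (simp add: mult_ac)
  qed
  have int_majorant: "integrable lborel (\<lambda>h. 2 * F * (indicator {h. R \<le> \<bar>h\<bar>} h * \<bar>h\<bar> powr - (1 + \<alpha>)))"
    using tail by (simp add: has_bochner_integral_iff)
  moreover have "integrable lborel (\<lambda>h. indicator {h. R \<le> \<bar>h\<bar>} h * sym_diff f x h * \<bar>h\<bar> powr - (1 + \<alpha>))"
  proof (rule Bochner_Integration.integrable_bound[OF int_majorant])
    show "AE h in lborel. norm (indicator {h. R \<le> \<bar>h\<bar>} h * sym_diff f x h * \<bar>h\<bar> powr - (1 + \<alpha>))
        \<le> norm (2 * F * (indicator {h. R \<le> \<bar>h\<bar>} h * \<bar>h\<bar> powr - (1 + \<alpha>)))"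
      using bound by (intro AE_I2) (simp only: real_norm_def, rule order_trans[OF _ abs_ge_self])
  qed (simp only: measurable_lborel2 sym_diff_def, measurable)
  ultimately have "norm (LBINT h. indicator {h. R \<le> \<bar>h\<bar>} h * sym_diff f x h * \<bar>h\<bar> powr - (1 + \<alpha>))
      \<le> (LBINT h. 2 * F * (indicator {h. R \<le> \<bar>h\<bar>} h * \<bar>h\<bar> powr - (1 + \<alpha>)))"
    using bound by (intro Bochner_Integration.integral_norm_bound_integral) auto
  also have "\<dots> = 2 * F * (2 / \<alpha> * R powr - \<alpha>)"
    using tail by (simp add: has_bochner_integral_iff)
  finally show ?thesis by simp
qed

lemma abs_tails_difference_le:
  fixes Q :: "real measure" and \<alpha> R k s S \<epsilon> :: real
  assumes alpha: "0 < \<alpha>" and Q: "prob_space Q" and sets: "sets Q = sets borel" and R: "0 < R"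
    and k: "0 \<le> k" and s: "0 \<le> s" "s \<le> S"
    and tail_mass: "k * measure Q {h. R \<le> \<bar>h\<bar>} \<le> R powr - \<alpha> * (\<epsilon> + 2 * S / \<alpha>)"
  shows "\<bar>k * (\<integral>h. indicator {h. R \<le> \<bar>h\<bar>} h * sym_diff f x h \<partial>Q)
           - s * (LBINT h. indicator {h. R \<le> \<bar>h\<bar>} h * sym_diff f x h * \<bar>h\<bar> powr - (1 + \<alpha>))\<bar>
         \<le> R powr - \<alpha> * (2 * F * (\<epsilon> + 2 * S / \<alpha>) + 4 * S * F / \<alpha>)"
proof -
  have tail_increment: "\<bar>k * (\<integral>h. indicator {h. R \<le> \<bar>h\<bar>} h * sym_diff f x h \<partial>Q)\<bar>
      \<le> R powr - \<alpha> * (2 * F * (\<epsilon> + 2 * S / \<alpha>))"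
  proof -
    have "\<bar>k * (\<integral>h. indicator {h. R \<le> \<bar>h\<bar>} h * sym_diff f x h \<partial>Q)\<bar> \<le> k * (2 * F * measure Q {h. R \<le> \<bar>h\<bar>})"
      using abs_integral_tail_le[OF Q sets, of R x] k by (simp add: abs_mult mult_left_mono)
    also have "\<dots> \<le> 2 * F * (R powr - \<alpha> * (\<epsilon> + 2 * S / \<alpha>))"
      using mult_left_mono[OF tail_mass, of "2 * F"] F_nonneg by (simp add: mult_ac)
    finally show ?thesis by (simp add: mult_ac)
  qed
  have tail_levy: "\<bar>s * (LBINT h. indicator {h. R \<le> \<bar>h\<bar>} h * sym_diff f x h * \<bar>h\<bar> powr - (1 + \<alpha>))\<bar>
      \<le> R powr - \<alpha> * (4 * S * F / \<alpha>)"
  proof -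
    have "\<bar>s * (LBINT h. indicator {h. R \<le> \<bar>h\<bar>} h * sym_diff f x h * \<bar>h\<bar> powr - (1 + \<alpha>))\<bar>
        \<le> S * (2 * F * (2 / \<alpha> * R powr - \<alpha>))"
      unfolding abs_mult using abs_levy_tail_le[OF alpha R, of x] s F_nonneg alpha
      by (intro mult_mono) auto
    then show ?thesis by (simp add: field_simps)
  qed
  have "R powr - \<alpha> * (2 * F * (\<epsilon> + 2 * S / \<alpha>) + 4 * S * F / \<alpha>)
      = R powr - \<alpha> * (2 * F * (\<epsilon> + 2 * S / \<alpha>)) + R powr - \<alpha> * (4 * S * F / \<alpha>)"
    by (simp add: distrib_left)
  then show ?thesis
    using tail_increment tail_levy by (simp add: abs_le_iff)
qed

lemma increment_minus_levy_decomposition: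
  fixes Q :: "real measure" and \<alpha> R k s :: real
  assumes alpha: "0 < \<alpha>" "\<alpha> < 2"
    and Q: "prob_space Q" and sets: "sets Q = sets borel" and symm: "distr Q borel uminus = Q"
    and R: "R > 0"
  defines "D \<equiv> \<lambda>r. k * measure Q {h. r \<le> \<bar>h\<bar>} - s * (2 / \<alpha> * r powr - \<alpha>)"
  shows "k * (LINT h|Q. f (x + h) - f x)
           - s * (LBINT z. (f (x + z) - f x - f' x * z * (if \<bar>z\<bar> \<le> 1 then 1 else 0)) * \<bar>z\<bar> powr - (1 + \<alpha>))
         = (LBINT t. antisym_diff f' x t * indicator {0..R} t * (D t - D R))
           + (k * (\<integral>h. indicator {h. R \<le> \<bar>h\<bar>} h * sym_diff f x h \<partial>Q)
              - s * (LBINT h. indicator {h. R \<le> \<bar>h\<bar>} h * sym_diff f x h * \<bar>h\<bar> powr - (1 + \<alpha>)))"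
    and "integrable lborel (\<lambda>t. antisym_diff f' x t * indicator {0..R} t * (D t - D R))"
proof -
  interpret prob_space Q by (rule Q)
  define g where "g t = antisym_diff f' x t * indicator {0..R} t" for t
  define W\<^sub>Q where "W\<^sub>Q t = measure Q {h. t \<le> \<bar>h\<bar> \<and> \<bar>h\<bar> < R}" for t
  define W\<^sub>\<nu> where "W\<^sub>\<nu> t = 2 / \<alpha> * (t powr - \<alpha> - R powr - \<alpha>)" for t
  note increment = integral_increment_layers[OF Q sets symm R, of x, folded g_def W\<^sub>Q_def]
  note levy = levy_integral_layers[OF alpha R, of x, folded g_def W\<^sub>\<nu>_def]
  have annulus: "W\<^sub>Q t = measure Q {h. t \<le> \<bar>h\<bar>} - measure Q {h. R \<le> \<bar>h\<bar>}" if "t \<le> R" for t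
  proof -
    have "{h. t \<le> \<bar>h\<bar> \<and> \<bar>h\<bar> < R} = {h. t \<le> \<bar>h\<bar>} - {h. R \<le> \<bar>h\<bar>}" by auto
    moreover have "measure Q ({h. t \<le> \<bar>h\<bar>} - {h. R \<le> \<bar>h\<bar>}) = measure Q {h. t \<le> \<bar>h\<bar>} - measure Q {h. R \<le> \<bar>h\<bar>}"
      using that sets by (intro finite_measure_Diff) auto
    ultimately show ?thesis
      unfolding W\<^sub>Q_def by simp
  qed
  have pointwise: "k * (g t * W\<^sub>Q t) - s * (g t * W\<^sub>\<nu> t) = antisym_diff f' x t * indicator {0..R} t * (D t - D R)" for t
    by (cases "t \<le> R") (auto simp: g_def D_def W\<^sub>\<nu>_def annulus algebra_simps split: split_indicator)
  have "k * (LINT h|Q. f (x + h) - f x)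
      - s * (LBINT z. (f (x + z) - f x - f' x * z * (if \<bar>z\<bar> \<le> 1 then 1 else 0)) * \<bar>z\<bar> powr - (1 + \<alpha>))
      = ((LBINT t. k * (g t * W\<^sub>Q t)) - (LBINT t. s * (g t * W\<^sub>\<nu> t)))
        + (k * (\<integral>h. indicator {h. R \<le> \<bar>h\<bar>} h * sym_diff f x h \<partial>Q)
           - s * (LBINT h. indicator {h. R \<le> \<bar>h\<bar>} h * sym_diff f x h * \<bar>h\<bar> powr - (1 + \<alpha>)))"
    unfolding increment(1) levy(1) by (simp add: algebra_simps)
  also have "(LBINT t. k * (g t * W\<^sub>Q t)) - (LBINT t. s * (g t * W\<^sub>\<nu> t))
      = (LBINT t. antisym_diff f' x t * indicator {0..R} t * (D t - D R))"
    using increment(2) levy(2) by (subst Bochner_Integration.integral_diff[symmetric]) (auto simp: pointwise)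
  finally show "k * (LINT h|Q. f (x + h) - f x)
           - s * (LBINT z. (f (x + z) - f x - f' x * z * (if \<bar>z\<bar> \<le> 1 then 1 else 0)) * \<bar>z\<bar> powr - (1 + \<alpha>))
         = (LBINT t. antisym_diff f' x t * indicator {0..R} t * (D t - D R))
           + (k * (\<integral>h. indicator {h. R \<le> \<bar>h\<bar>} h * sym_diff f x h \<partial>Q)
              - s * (LBINT h. indicator {h. R \<le> \<bar>h\<bar>} h * sym_diff f x h * \<bar>h\<bar> powr - (1 + \<alpha>)))" .
  have "integrable lborel (\<lambda>t. k * (g t * W\<^sub>Q t) - s * (g t * W\<^sub>\<nu> t))"
    using increment(2) levy(2) by auto
  then show "integrable lborel (\<lambda>t. antisym_diff f' x t * indicator {0..R} t * (D t - D R))"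
    by (simp add: pointwise)
qed

lemma abs_increment_minus_levy_le:
  fixes Q :: "real measure" and \<alpha> R a k s S \<epsilon> :: real
  assumes alpha: "0 < \<alpha>" "\<alpha> < 2"
    and Q: "prob_space Q" and sets: "sets Q = sets borel" and symm: "distr Q borel uminus = Q"
    and a: "0 < a" "a \<le> R" and k: "0 \<le> k" and s: "0 \<le> s" "s \<le> S"
    and far: "\<And>r. a \<le> r \<Longrightarrow> \<bar>k * measure Q {h. r \<le> \<bar>h\<bar>} - s * (2 / \<alpha> * r powr - \<alpha>)\<bar> \<le> \<epsilon> * r powr - \<alpha>"
  shows "\<bar>k * (LINT h|Q. f (x + h) - f x)
           - s * (LBINT z. (f (x + z) - f x - f' x * z * (if \<bar>z\<bar> \<le> 1 then 1 else 0)) * \<bar>z\<bar> powr - (1 + \<alpha>))\<bar>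
         \<le> B * k * (a powr 2 / 2) + B * (2 * S / \<alpha>) * (a powr (2 - \<alpha>) / (2 - \<alpha>))
           + \<epsilon> * B * (R powr (2 - \<alpha>) / (2 - \<alpha>) + R powr - \<alpha> * (R powr 2 / 2))
           + R powr - \<alpha> * (2 * F * (\<epsilon> + 2 * S / \<alpha>) + 4 * S * F / \<alpha>)"
proof -
  interpret prob_space Q by (rule Q)
  define D where "D r = k * measure Q {h. r \<le> \<bar>h\<bar>} - s * (2 / \<alpha> * r powr - \<alpha>)" for r
  have R: "0 < R" using a by simp
  note decomposition = increment_minus_levy_decomposition[OF alpha Q sets symm R, where k=k and s=s and x=x, folded D_def]
  have near: "\<bar>D r\<bar> \<le> k + 2 * S / \<alpha> * r powr - \<alpha>" for r
  proof -
    have "0 \<le> k * measure Q {h. r \<le> \<bar>h\<bar>}" "k * measure Q {h. r \<le> \<bar>h\<bar>} \<le> k"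
      using k by (auto intro: mult_left_le)
    moreover have "0 \<le> s * (2 / \<alpha> * r powr - \<alpha>)" "s * (2 / \<alpha> * r powr - \<alpha>) \<le> 2 * S / \<alpha> * r powr - \<alpha>"
      using s alpha mult_right_mono[OF s(2), of "2 / \<alpha> * r powr - \<alpha>"] by (auto simp: mult_ac)
    ultimately show ?thesis
      unfolding D_def by (simp add: abs_le_iff)
  qed
  have layers: "\<bar>LBINT t. antisym_diff f' x t * indicator {0..R} t * (D t - D R)\<bar>
      \<le> B * k * (a powr 2 / 2) + B * (2 * S / \<alpha>) * (a powr (2 - \<alpha>) / (2 - \<alpha>))
        + \<epsilon> * B * (R powr (2 - \<alpha>) / (2 - \<alpha>) + R powr - \<alpha> * (R powr 2 / 2))"
  proof (rule abs_integral_layer_defect_le[OF alpha a _ _ _ decomposition(2)])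
    show "\<bar>antisym_diff f' x t\<bar> \<le> B * t" if "0 \<le> t" for t
      using abs_antisym_diff_le[of x t] that by simp
  qed (use near far in \<open>auto simp: D_def\<close>)
  have tails: "\<bar>k * (\<integral>h. indicator {h. R \<le> \<bar>h\<bar>} h * sym_diff f x h \<partial>Q)
      - s * (LBINT h. indicator {h. R \<le> \<bar>h\<bar>} h * sym_diff f x h * \<bar>h\<bar> powr - (1 + \<alpha>))\<bar>
      \<le> R powr - \<alpha> * (2 * F * (\<epsilon> + 2 * S / \<alpha>) + 4 * S * F / \<alpha>)"
    using far[OF a(2)] s alpha mult_right_mono[OF s(2), of "2 / \<alpha> * R powr - \<alpha>"]
    by (intro abs_tails_difference_le[OF alpha(1) Q sets R k s]) (simp add: abs_le_iff algebra_simps)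
  show ?thesis
    unfolding decomposition(1) using layers tails by linarith
qed

lemma abs_scaled_increment_minus_levy_le:
  fixes P :: "real measure" and \<alpha> \<eta> K R s S u\<^sub>0 \<epsilon> :: real
  assumes alpha: "0 < \<alpha>" "\<alpha> < 2" and eta: "0 < \<eta>"
    and P: "prob_space P" and sets: "sets P = sets borel" and symm: "distr P borel uminus = P"
    and s: "0 \<le> s" "s \<le> S" and K: "0 < K" and u\<^sub>0: "0 < u\<^sub>0" "u\<^sub>0 / K powr (\<eta> / \<alpha>) \<le> R"
    and close: "\<And>u. u\<^sub>0 \<le> u \<Longrightarrow> \<bar>u powr \<alpha> * measure P {h. u \<le> \<bar>h\<bar>} - 2 * s / \<alpha>\<bar> < \<epsilon>"
  shows "\<bar>K powr \<eta> * (LINT h|distr P borel (\<lambda>h. h / K powr (\<eta> / \<alpha>)). f (x + h) - f x)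
           - s * (LBINT z. (f (x + z) - f x - f' x * z * (if \<bar>z\<bar> \<le> 1 then 1 else 0)) * \<bar>z\<bar> powr - (1 + \<alpha>))\<bar>
         \<le> B * K powr \<eta> * ((u\<^sub>0 / K powr (\<eta> / \<alpha>)) powr 2 / 2)
           + B * (2 * S / \<alpha>) * ((u\<^sub>0 / K powr (\<eta> / \<alpha>)) powr (2 - \<alpha>) / (2 - \<alpha>))
           + \<epsilon> * B * (R powr (2 - \<alpha>) / (2 - \<alpha>) + R powr - \<alpha> * (R powr 2 / 2))
           + R powr - \<alpha> * (2 * F * (\<epsilon> + 2 * S / \<alpha>) + 4 * S * F / \<alpha>)"
proof -
  define c where "c = K powr (\<eta> / \<alpha>)"
  have c: "0 < c" and c_powr: "c powr \<alpha> = K powr \<eta>"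
    using K alpha by (auto simp: c_def powr_powr)
  have Q: "prob_space (distr P borel (\<lambda>h. h / c))"
    using P by (intro prob_space.prob_space_distr) (auto simp: measurable_cong_sets[OF sets refl])
  have a: "0 < u\<^sub>0 / c" "u\<^sub>0 / c \<le> R"
    using u\<^sub>0 c by (auto simp: c_def)
  have far: "\<bar>K powr \<eta> * measure (distr P borel (\<lambda>h. h / c)) {h. r \<le> \<bar>h\<bar>} - s * (2 / \<alpha> * r powr - \<alpha>)\<bar>
      \<le> \<epsilon> * r powr - \<alpha>" if "u\<^sub>0 / c \<le> r" for r
  proof -
    have r: "0 < r" "u\<^sub>0 \<le> r * c"
      using less_le_trans[OF a(1) that] that c by (simp_all add: field_simps)
    show ?thesis
      using scaled_tail_defect_le[OF sets alpha(1) c r close] by (simp add: c_powr)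
  qed
  from abs_increment_minus_levy_le[OF alpha Q _ distr_scale_symmetric[OF sets symm] a _ s far, where x=x]
  show ?thesis
    using K by (simp add: c_def)
qed

lemma uniform_limit_scaled_increment:
  fixes \<alpha> \<eta> S :: real and P :: "real \<Rightarrow> real measure" and \<sigma> :: "real \<Rightarrow> real"
  assumes alpha: "0 < \<alpha>" "\<alpha> < 2" and eta: "0 < \<eta>"
    and prob: "\<And>x. prob_space (P x)" and borel: "\<And>x. sets (P x) = sets borel"
    and symm: "\<And>x. distr (P x) borel uminus = P x"
    and sigma: "\<And>x. 0 \<le> \<sigma> x" "\<And>x. \<sigma> x \<le> S"
    and tail: "uniform_limit UNIV (\<lambda>u x. u powr \<alpha> * measure (P x) {h. \<bar>h\<bar> \<ge> u}) (\<lambda>x. 2 * \<sigma> x / \<alpha>) at_top"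
  shows "uniform_limit UNIV
           (\<lambda>K x. K powr \<eta> * (LINT h|distr (P x) borel (\<lambda>h. h / K powr (\<eta> / \<alpha>)). f (x + h) - f x))
           (\<lambda>x. \<sigma> x * (LBINT z. (f (x + z) - f x - f' x * z * (if \<bar>z\<bar> \<le> 1 then 1 else 0)) * \<bar>z\<bar> powr - (1 + \<alpha>)))
           at_top" (is "uniform_limit UNIV ?A ?L at_top")
  unfolding uniform_limit_iff
proof (intro allI impI)
  fix e :: real assume e: "0 < e"
  txt \<open>\<open>R\<close> makes the tails small, \<open>\<epsilon>\<close> the layers \<open>t \<ge> u\<^sub>0/K\<^sup>\<eta>\<^sup>/\<^sup>\<alpha>\<close>, and large \<open>K\<close> the layers below.\<close>
  define C\<^sub>1 where "C\<^sub>1 = 2 * F * (1 + 2 * S / \<alpha>) + 4 * S * F / \<alpha>"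
  have "((\<lambda>R. R powr - \<alpha> * C\<^sub>1) \<longlongrightarrow> 0 * C\<^sub>1) at_top"
    using alpha by (intro tendsto_mult tendsto_const tendsto_neg_powr filterlim_ident) auto
  then have "\<forall>\<^sub>F R in at_top. 1 \<le> R \<and> R powr - \<alpha> * C\<^sub>1 < e / 3"
    using e by (intro eventually_conj eventually_ge_at_top order_tendstoD(2)) auto
  then obtain R where R: "1 \<le> R" "R powr - \<alpha> * C\<^sub>1 < e / 3"
    unfolding eventually_at_top_linorder by blast
  define C\<^sub>2 where "C\<^sub>2 = B * (R powr (2 - \<alpha>) / (2 - \<alpha>) + R powr - \<alpha> * (R powr 2 / 2))"
  have C\<^sub>2: "0 \<le> C\<^sub>2"
    using B_nonneg alpha by (simp add: C\<^sub>2_def)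
  define \<epsilon> where "\<epsilon> = min 1 (e / (3 * (C\<^sub>2 + 1)))"
  have \<epsilon>: "0 < \<epsilon>" "\<epsilon> \<le> 1" "\<epsilon> * C\<^sub>2 < e / 3"
  proof -
    show "0 < \<epsilon>" "\<epsilon> \<le> 1" using e C\<^sub>2 by (auto simp: \<epsilon>_def)
    have "\<epsilon> * C\<^sub>2 \<le> e / (3 * (C\<^sub>2 + 1)) * C\<^sub>2"
      using C\<^sub>2 by (intro mult_right_mono) (auto simp: \<epsilon>_def)
    also have "\<dots> < e / 3"
      using e C\<^sub>2 by (simp add: field_simps)
    finally show "\<epsilon> * C\<^sub>2 < e / 3" .
  qed
  obtain u\<^sub>0 where u\<^sub>0: "0 < u\<^sub>0"
    and close: "\<And>u x. u\<^sub>0 \<le> u \<Longrightarrow> \<bar>u powr \<alpha> * measure (P x) {h. u \<le> \<bar>h\<bar>} - 2 * \<sigma> x / \<alpha>\<bar> < \<epsilon>"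
  proof -
    from tail[unfolded uniform_limit_iff, rule_format, OF \<epsilon>(1)]
    obtain N where "\<And>u x. N \<le> u \<Longrightarrow> \<bar>u powr \<alpha> * measure (P x) {h. u \<le> \<bar>h\<bar>} - 2 * \<sigma> x / \<alpha>\<bar> < \<epsilon>"
      unfolding eventually_at_top_linorder dist_real_def by blast
    then show thesis
      by (intro that[of "max N 1"]) auto
  qed
  define \<Phi> where "\<Phi> K = B * K powr \<eta> * ((u\<^sub>0 / K powr (\<eta> / \<alpha>)) powr 2 / 2)
      + B * (2 * S / \<alpha>) * ((u\<^sub>0 / K powr (\<eta> / \<alpha>)) powr (2 - \<alpha>) / (2 - \<alpha>))" for K
  have "(\<Phi> \<longlongrightarrow> 0) at_top"
    unfolding \<Phi>_def using u\<^sub>0 by (intro tendsto_inner_layer_error_0[OF alpha eta]) simp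
  then have "\<forall>\<^sub>F K in at_top. \<Phi> K < e / 3"
    using e by (intro order_tendstoD(2)) auto
  moreover have "((\<lambda>K. K powr 0 * (u\<^sub>0 / K powr (\<eta> / \<alpha>)) powr 1) \<longlongrightarrow> 0) at_top"
    using alpha eta u\<^sub>0 by (intro tendsto_powr_mult_scaled_powr_0) auto
  then have "\<forall>\<^sub>F K in at_top. K powr 0 * (u\<^sub>0 / K powr (\<eta> / \<alpha>)) powr 1 < R"
    using R by (intro order_tendstoD(2)) auto
  ultimately show "\<forall>\<^sub>F K in at_top. \<forall>x\<in>UNIV. dist (?A K x) (?L x) < e"
    using eventually_gt_at_top[of 0]
  proof eventually_elim
    case (elim K)
    show ?case
    proof
      fix x
      have "u\<^sub>0 / K powr (\<eta> / \<alpha>) \<le> R"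
        using elim(2) elim(3) u\<^sub>0 by simp
      note bound = abs_scaled_increment_minus_levy_le[OF alpha eta prob[of x] borel[of x] symm[of x]
          sigma(1)[of x] sigma(2)[of x] elim(3) u\<^sub>0 this close[of _ x], where x=x]
      have "\<epsilon> * B * (R powr (2 - \<alpha>) / (2 - \<alpha>) + R powr - \<alpha> * (R powr 2 / 2)) = \<epsilon> * C\<^sub>2"
        by (simp add: C\<^sub>2_def)
      moreover have "R powr - \<alpha> * (2 * F * (\<epsilon> + 2 * S / \<alpha>) + 4 * S * F / \<alpha>) \<le> R powr - \<alpha> * C\<^sub>1"
        using \<epsilon> F_nonneg by (auto simp: C\<^sub>1_def intro!: mult_left_mono)
      ultimately show "dist (?A K x) (?L x) < e"
        using bound elim(1) \<epsilon>(3) R(2) unfolding \<Phi>_def dist_real_def by linarith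
    qed
  qed
qed

end

lemma C2b_imp_C2_bounded:
  assumes "C2b f"
  obtains f'' F B where "C2_bounded f (deriv f) f'' F B"
proof -
  obtain f' f'' where df: "\<And>x. (f has_real_derivative f' x) (at x)"
    and df': "\<And>x. (f' has_real_derivative f'' x) (at x)"
    and "bounded (range f)" "bounded (range f'')"
    using assms unfolding C2b_def by blast
  then obtain F B where "\<And>x. \<bar>f x\<bar> \<le> F" "\<And>x. \<bar>f'' x\<bar> \<le> B"
    by (auto simp: bounded_real)
  moreover have "deriv f = f'"
    using df by (intro ext DERIV_imp_deriv)
  ultimately show thesis
    using df df' by (intro that[of f'' F B] C2_bounded.intro) auto
qed

theorem proposition3p1:
  fixes \<alpha> \<eta> :: real and P :: "real \<Rightarrow> real measure" and \<sigma> :: "real \<Rightarrow> real"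
  assumes alpha: "0 < \<alpha>" "\<alpha> < 2" and eta: "0 < \<eta>"
    and prob: "\<And>x. prob_space (P x)"
    and borel: "\<And>x. sets (P x) = sets borel"
    and symm: "\<And>x. distr (P x) borel uminus = P x"
    and sigma_nonneg: "\<And>x. 0 \<le> \<sigma> x"
    and sigma_bdd: "bounded (range \<sigma>)"
    and tail: "uniform_limit UNIV
                 (\<lambda>u x. u powr \<alpha> * measure (P x) {h. \<bar>h\<bar> \<ge> u})
                 (\<lambda>x. 2 * \<sigma> x / \<alpha>) at_top"
  defines "M \<equiv> (\<lambda>K x. distr (P x) borel (\<lambda>h. h / K powr (\<eta> / \<alpha>)))"
    and "L \<equiv> (\<lambda>f x. \<sigma> x * (LINT z|lborel.
               (f (x + z) - f x - deriv f x * z * (if \<bar>z\<bar> \<le> 1 then 1 else 0))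
                 * \<bar>z\<bar> powr (-(1 + \<alpha>))))"
  shows "(1 < \<alpha> \<longrightarrow> (\<forall>f. C2b f \<longrightarrow>
            uniform_limit UNIV (\<lambda>K x. K powr \<eta> * (LINT h|M K x. f (x + h) - f x))
              (L f) at_top))
       \<and> (\<alpha> \<le> 1 \<longrightarrow> (\<forall>f. C2b f \<and> compact_support f \<longrightarrow>
            uniform_limit UNIV (\<lambda>K x. K powr \<eta> * (LINT h|M K x. f (x + h) - f x))
              (L f) at_top))"
proof -
  obtain S where S: "\<And>x. \<sigma> x \<le> S"
    using sigma_bdd by (force simp: bounded_real abs_le_iff)
  have "uniform_limit UNIV (\<lambda>K x. K powr \<eta> * (LINT h|M K x. f (x + h) - f x)) (L f) at_top"
    if f: "C2b f" for f
  proof -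
    obtain f'' F B where "C2_bounded f (deriv f) f'' F B"
      using C2b_imp_C2_bounded[OF f] .
    from C2_bounded.uniform_limit_scaled_increment[OF this alpha eta prob borel symm sigma_nonneg S tail]
    show ?thesis
      unfolding M_def L_def .
  qed
  then show ?thesis
    by blast
qed

end
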